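(* Let $n\ge1$, $t_1<\dots<t_n$, $p_0,\dots,p_n>0$, $q_k=p_k^{-1/2}$, and let $a_k^\pm,b_k^\pm$ ($0\le k\le n$) be the connection coefficients defined in the context. Then: (i) For $z\in\mathbb{C}\setminus(-\infty,0]$ and all $1\le k\le n-1$, $$\frac{a_0^+(z)}{q_0}=\frac{1}{q_k}\big(a_k^+(z)b_k^-(z)-a_k^-(z)b_k^+(z)\big)=\frac{b_n^-(z)}{q_n}.$$ (ii) For $\lambda\in(0,\infty)$ and all $0\le k\le n$, $$q_0\big(|b_k^-(\lambda)|^2-|a_k^-(\lambda)|^2\big)=q_n\big(|a_k^+(\lambda)|^2-|b_k^+(\lambda)|^2\big)=q_k,$$ and consequently $$\frac{|a_k^+(\lambda)|^2}{q_0}+\frac{|a_k^-(\lambda)|^2}{q_n}=\frac{|b_k^+(\lambda)|^2}{q_0}+\frac{|b_k^-(\lambda)|^2}{q_n}.$$ (iii) For $\lambda\in(0,\infty)$ and all $1\le k\le n-1$, $$\frac{b_0^+(\lambda)}{q_0}=\frac{1}{q_k}\Big(b_k^+(\lambda)\overline{b_k^-(\lambda)}-a_k^+(\lambda)\overline{a_k^-(\lambda)}\Big)=-\frac{\overline{a_n^-(\lambda)}}{q_n}.$$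
   Context: For $z\in\mathbb{C}\setminus(-\infty,0]$, $\sqrt z$ is the principal square root. For $1\le k\le n$ let $$L_k(z)=\frac12\begin{bmatrix}\left(1+\frac{q_k}{q_{k-1}}\right)e^{it_k(q_{k-1}-q_k)\sqrt z} & \left(1-\frac{q_k}{q_{k-1}}\right)e^{-it_k(q_{k-1}+q_k)\sqrt z}\\ \left(1-\frac{q_k}{q_{k-1}}\right)e^{it_k(q_{k-1}+q_k)\sqrt z} & \left(1+\frac{q_k}{q_{k-1}}\right)e^{-it_k(q_{k-1}-q_k)\sqrt z}\end{bmatrix},\qquad R_k(z)=L_k(z)^{-1}.$$ The connection coefficients are defined by $a_n^+=1$, $b_n^+=0$, $(a_l^+,b_l^+)^T=R_{l+1}(z)(a_{l+1}^+,b_{l+1}^+)^T$ for $l=n-1,\dots,0$; and $a_0^-=0$, $b_0^-=1$, $(a_j^-,b_j^-)^T=L_j(z)(a_{j-1}^-,b_{j-1}^-)^T$ for $j=1,\dots,n$. *)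

theory Defs
  imports "HOL-Analysis.Analysis"
begin

definition qq :: "(nat \<Rightarrow> real) \<Rightarrow> nat \<Rightarrow> real" where
  "qq p k = p k powr (-1/2)"

definition Lmat :: "(nat \<Rightarrow> real) \<Rightarrow> (nat \<Rightarrow> real) \<Rightarrow> nat \<Rightarrow> complex \<Rightarrow> complex^2^2" where
  "Lmat t q k z =
    (let r = complex_of_real (q k / q (k - 1));
         s = csqrt z;
         tk = complex_of_real (t k);
         dm = complex_of_real (q (k - 1) - q k);
         dp = complex_of_real (q (k - 1) + q k)
     in \<chi> i j.
        if i = 1 then
          (if j = 1 then (1 + r) / 2 * exp (\<i> * tk * dm * s)
           else (1 - r) / 2 * exp (- \<i> * tk * dp * s))
        else
          (if j = 1 then (1 - r) / 2 * exp (\<i> * tk * dp * s)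
           else (1 + r) / 2 * exp (- \<i> * tk * dm * s)))"

definition Rmat :: "(nat \<Rightarrow> real) \<Rightarrow> (nat \<Rightarrow> real) \<Rightarrow> nat \<Rightarrow> complex \<Rightarrow> complex^2^2" where
  "Rmat t q k z = matrix_inv (Lmat t q k z)"

definition vec2 :: "complex \<Rightarrow> complex \<Rightarrow> complex^2" where
  "vec2 a b = (\<chi> i. if i = 1 then a else b)"

text \<open>plus_aux m = (a^+_{n-m}, b^+_{n-m}) for m \<le> n.\<close>
fun plus_aux :: "(nat \<Rightarrow> real) \<Rightarrow> (nat \<Rightarrow> real) \<Rightarrow> nat \<Rightarrow> complex \<Rightarrow> nat \<Rightarrow> complex^2" where
  "plus_aux t q n z 0 = vec2 1 0"
| "plus_aux t q n z (Suc m) = Rmat t q (n - m) z *v plus_aux t q n z m"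

definition conn_plus :: "(nat \<Rightarrow> real) \<Rightarrow> (nat \<Rightarrow> real) \<Rightarrow> nat \<Rightarrow> complex \<Rightarrow> nat \<Rightarrow> complex^2" where
  "conn_plus t q n z l = plus_aux t q n z (n - l)"

fun conn_minus :: "(nat \<Rightarrow> real) \<Rightarrow> (nat \<Rightarrow> real) \<Rightarrow> complex \<Rightarrow> nat \<Rightarrow> complex^2" where
  "conn_minus t q z 0 = vec2 0 1"
| "conn_minus t q z (Suc j) = Lmat t q (Suc j) z *v conn_minus t q z j"

definition a_plus where "a_plus t q n z k = conn_plus t q n z k $ 1"
definition b_plus where "b_plus t q n z k = conn_plus t q n z k $ 2"
definition a_minus where "a_minus t q z k = conn_minus t q z k $ 1"
definition b_minus where "b_minus t q z k = conn_minus t q z k $ 2"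

end

theory Submission
  imports Defs
begin

(* Both connection sequences are transported by the transfer matrices, v k = L_k v (k-1). The
  Wronskian of two such sequences is multiplied by det L_k = q_k / q_(k-1) at each step, so divided
  by q_k it does not depend on k. For z = lambda > 0 the square root is real and L_k has the shape
  [[alpha, beta], [cnj beta, cnj alpha]], so the same holds for the indefinite Hermitian form
  diag(-1, 1). Evaluating these invariants at k = 0 and k = n, where the connection coefficients are
  unit vectors, gives all identities. *)

definition wronskian :: "complex^2 \<Rightarrow> complex^2 \<Rightarrow> complex" where
  "wronskian u v = u$1 * v$2 - v$1 * u$2"

definition indefinite_form :: "complex^2 \<Rightarrow> complex^2 \<Rightarrow> complex" where
  "indefinite_form u v = u$2 * cnj (v$2) - u$1 * cnj (v$1)"

definition transfer_sequence ::
    "(nat \<Rightarrow> real) \<Rightarrow> (nat \<Rightarrow> real) \<Rightarrow> nat \<Rightarrow> complex \<Rightarrow> (nat \<Rightarrow> complex^2) \<Rightarrow> bool" where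
  "transfer_sequence t q n z v \<longleftrightarrow> (\<forall>k. 1 \<le> k \<longrightarrow> k \<le> n \<longrightarrow> v k = Lmat t q k z *v v (k - 1))"

lemma vec2_nth [simp]: "vec2 a b $ 1 = a" "vec2 a b $ 2 = b"
  by (simp_all add: vec2_def)

lemma matrix_vector_mult_2:
  fixes M :: "'a::comm_semiring_1^2^2"
  shows "(M *v u) $ 1 = M$1$1 * u$1 + M$1$2 * u$2"
    and "(M *v u) $ 2 = M$2$1 * u$1 + M$2$2 * u$2"
  by (simp_all add: matrix_vector_mult_def sum_2)

lemma wronskian_mult: "wronskian (M *v u) (M *v v) = det M * wronskian u v"
  by (simp add: wronskian_def matrix_vector_mult_2 det_2 algebra_simps)

lemma indefinite_form_mult:
  assumes "M$2$1 = cnj (M$1$2)" and "M$2$2 = cnj (M$1$1)"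
  shows "indefinite_form (M *v u) (M *v v) = det M * indefinite_form u v"
  using assms by (simp add: indefinite_form_def matrix_vector_mult_2 det_2 algebra_simps)

lemma indefinite_form_self: "indefinite_form u u = of_real ((cmod (u$2))\<^sup>2 - (cmod (u$1))\<^sup>2)"
  unfolding indefinite_form_def of_real_diff complex_norm_square by simp

lemma matrix_inv_right:
  fixes M :: "'a::field^'n^'n"
  assumes "invertible M"
  shows "M ** matrix_inv M = mat 1"
proof -
  from assms obtain M' where "M ** M' = mat 1 \<and> M' ** M = mat 1"
    by (auto simp: invertible_def)
  then show ?thesis
    unfolding matrix_inv_def by (rule someI2) blast
qed

lemma quotient_invariant:
  fixes g q :: "nat \<Rightarrow> 'a::field"
  assumes nz: "\<And>k. k \<le> n \<Longrightarrow> q k \<noteq> 0"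
    and step: "\<And>k. 1 \<le> k \<Longrightarrow> k \<le> n \<Longrightarrow> g k = q k / q (k - 1) * g (k - 1)"
    and "k \<le> n"
  shows "g k / q k = g 0 / q 0"
  using \<open>k \<le> n\<close>
proof (induction k)
  case (Suc k)
  then have "q k \<noteq> 0" "q (Suc k) \<noteq> 0"
    using nz by auto
  with Suc step[of "Suc k"] show ?case
    by simp
qed simp

lemma det_Lmat:
  assumes "q (k - 1) \<noteq> 0"
  shows "det (Lmat t q k z) = of_real (q k / q (k - 1))"
proof -
  define r where "r = complex_of_real (q k / q (k - 1))"
  define A where "A = \<i> * of_real (t k) * of_real (q (k - 1) - q k) * csqrt z"
  define B where "B = \<i> * of_real (t k) * of_real (q (k - 1) + q k) * csqrt z"
  have "det (Lmat t q k z)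
      = (1 + r)/2 * exp A * ((1 + r)/2 * exp (- A)) - (1 - r)/2 * exp (- B) * ((1 - r)/2 * exp B)"
    by (simp add: det_2 Lmat_def Let_def r_def A_def B_def)
  also have "\<dots> = (1 + r)/2 * ((1 + r)/2) * (exp A * exp (- A))
      - (1 - r)/2 * ((1 - r)/2) * (exp B * exp (- B))"
    by (simp only: mult_ac)
  also have "\<dots> = r"
    by (simp only: exp_minus_inverse) (simp add: field_simps power2_eq_square)
  finally show ?thesis
    by (simp add: r_def)
qed

lemma Lmat_of_nonneg_real:
  assumes "lam \<ge> 0"
  shows "Lmat t q k (of_real lam) $ 2 $ 1 = cnj (Lmat t q k (of_real lam) $ 1 $ 2)"
    and "Lmat t q k (of_real lam) $ 2 $ 2 = cnj (Lmat t q k (of_real lam) $ 1 $ 1)"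
  using assms by (simp_all add: Lmat_def Let_def exp_cnj)

lemma transfer_sequence_conn_minus: "transfer_sequence t q n z (conn_minus t q z)"
  unfolding transfer_sequence_def by (auto simp: Suc_le_eq gr0_conv_Suc)

lemma transfer_sequence_conn_plus:
  assumes nz: "\<And>k. k \<le> n \<Longrightarrow> q k \<noteq> 0"
  shows "transfer_sequence t q n z (conn_plus t q n z)"
  unfolding transfer_sequence_def
proof (intro allI impI)
  fix k assume k: "1 \<le> k" "k \<le> n"
  then have "det (Lmat t q k z) \<noteq> 0"
    using nz[of k] nz[of "k - 1"] by (simp add: det_Lmat)
  then have inv: "Lmat t q k z ** Rmat t q k z = mat 1"
    by (simp add: Rmat_def matrix_inv_right invertible_det_nz)
  have "n - (k - 1) = Suc (n - k)" "n - (n - k) = k"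
    using k by auto
  then have "conn_plus t q n z (k - 1) = Rmat t q k z *v conn_plus t q n z k"
    by (simp add: conn_plus_def)
  then show "conn_plus t q n z k = Lmat t q k z *v conn_plus t q n z (k - 1)"
    by (simp add: matrix_vector_mul_assoc inv)
qed

lemma transfer_sequenceD:
  "transfer_sequence t q n z v \<Longrightarrow> 1 \<le> k \<Longrightarrow> k \<le> n \<Longrightarrow> v k = Lmat t q k z *v v (k - 1)"
  unfolding transfer_sequence_def by blast

lemma wronskian_quotient_invariant:
  assumes nz: "\<And>k. k \<le> n \<Longrightarrow> q k \<noteq> 0"
    and u: "transfer_sequence t q n z u" and v: "transfer_sequence t q n z v"
    and "k \<le> n"
  shows "wronskian (u k) (v k) / of_real (q k) = wronskian (u 0) (v 0) / of_real (q 0)"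
proof (rule quotient_invariant[where q = "\<lambda>k. of_real (q k)"])
  fix k assume k: "1 \<le> k" "k \<le> n"
  show "wronskian (u k) (v k)
      = of_real (q k) / of_real (q (k - 1)) * wronskian (u (k - 1)) (v (k - 1))"
    using nz[of "k - 1"] k
    by (simp add: transfer_sequenceD[OF u k] transfer_sequenceD[OF v k] wronskian_mult det_Lmat)
qed (use nz \<open>k \<le> n\<close> in auto)

lemma indefinite_form_quotient_invariant:
  assumes nz: "\<And>k. k \<le> n \<Longrightarrow> q k \<noteq> 0" and "lam \<ge> 0"
    and u: "transfer_sequence t q n (of_real lam) u" and v: "transfer_sequence t q n (of_real lam) v"
    and "k \<le> n"
  shows "indefinite_form (u k) (v k) / of_real (q k) = indefinite_form (u 0) (v 0) / of_real (q 0)"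
proof (rule quotient_invariant[where q = "\<lambda>k. of_real (q k)"])
  fix k assume k: "1 \<le> k" "k \<le> n"
  show "indefinite_form (u k) (v k)
      = of_real (q k) / of_real (q (k - 1)) * indefinite_form (u (k - 1)) (v (k - 1))"
    using nz[of "k - 1"] k
    by (simp add: transfer_sequenceD[OF u k] transfer_sequenceD[OF v k] det_Lmat
        indefinite_form_mult[OF Lmat_of_nonneg_real[OF \<open>lam \<ge> 0\<close>]])
qed (use nz \<open>k \<le> n\<close> in auto)

lemma indefinite_form_self_quotient_invariant:
  assumes nz: "\<And>k. k \<le> n \<Longrightarrow> q k \<noteq> 0" and "lam \<ge> 0"
    and u: "transfer_sequence t q n (of_real lam) u" and "k \<le> n"
  shows "((cmod (u k $ 2))\<^sup>2 - (cmod (u k $ 1))\<^sup>2) / q k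
    = ((cmod (u 0 $ 2))\<^sup>2 - (cmod (u 0 $ 1))\<^sup>2) / q 0"
proof -
  have "complex_of_real (((cmod (u k $ 2))\<^sup>2 - (cmod (u k $ 1))\<^sup>2) / q k)
      = of_real (((cmod (u 0 $ 2))\<^sup>2 - (cmod (u 0 $ 1))\<^sup>2) / q 0)"
    using indefinite_form_quotient_invariant[OF nz \<open>lam \<ge> 0\<close> u u \<open>k \<le> n\<close>]
    by (simp only: indefinite_form_self of_real_divide)
  then show ?thesis
    by (simp only: of_real_eq_iff)
qed

lemma conn_plus_last [simp]: "conn_plus t q n z n = vec2 1 0"
  by (simp add: conn_plus_def)

lemma conn_wronskian_quotient:
  assumes nz: "\<And>k. k \<le> n \<Longrightarrow> q k \<noteq> 0" and "k \<le> n"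
  shows "(a_plus t q n z k * b_minus t q z k - a_minus t q z k * b_plus t q n z k) / of_real (q k)
    = a_plus t q n z 0 / of_real (q 0)"
  using wronskian_quotient_invariant[OF nz transfer_sequence_conn_plus[OF nz]
      transfer_sequence_conn_minus \<open>k \<le> n\<close>]
  by (simp add: wronskian_def a_plus_def b_plus_def a_minus_def b_minus_def)

lemma conn_indefinite_form_quotient:
  assumes nz: "\<And>k. k \<le> n \<Longrightarrow> q k \<noteq> 0" and "lam \<ge> 0" and "k \<le> n"
  shows "(b_plus t q n (of_real lam) k * cnj (b_minus t q (of_real lam) k)
      - a_plus t q n (of_real lam) k * cnj (a_minus t q (of_real lam) k)) / of_real (q k)
    = b_plus t q n (of_real lam) 0 / of_real (q 0)"
  using indefinite_form_quotient_invariant[OF nz \<open>lam \<ge> 0\<close> transfer_sequence_conn_plus[OF nz]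
      transfer_sequence_conn_minus \<open>k \<le> n\<close>]
  by (simp add: indefinite_form_def a_plus_def b_plus_def a_minus_def b_minus_def)

lemma conn_minus_norm_quotient:
  assumes nz: "\<And>k. k \<le> n \<Longrightarrow> q k \<noteq> 0" and "lam \<ge> 0" and "k \<le> n"
  shows "((cmod (b_minus t q (of_real lam) k))\<^sup>2 - (cmod (a_minus t q (of_real lam) k))\<^sup>2) / q k
    = 1 / q 0"
  using indefinite_form_self_quotient_invariant[OF nz \<open>lam \<ge> 0\<close> transfer_sequence_conn_minus \<open>k \<le> n\<close>]
  by (simp add: a_minus_def b_minus_def)

lemma conn_plus_norm_quotient:
  assumes nz: "\<And>k. k \<le> n \<Longrightarrow> q k \<noteq> 0" and "lam \<ge> 0" and "k \<le> n"
  shows "((cmod (b_plus t q n (of_real lam) k))\<^sup>2 - (cmod (a_plus t q n (of_real lam) k))\<^sup>2) / q k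
    = - 1 / q n"
  using indefinite_form_self_quotient_invariant[OF nz \<open>lam \<ge> 0\<close> transfer_sequence_conn_plus[OF nz] \<open>k \<le> n\<close>]
    indefinite_form_self_quotient_invariant[OF nz \<open>lam \<ge> 0\<close> transfer_sequence_conn_plus[OF nz] order_refl]
  by (simp add: a_plus_def b_plus_def)

theorem lemma3p4:
  fixes n :: nat and t p :: "nat \<Rightarrow> real"
  assumes hn: "n \<ge> 1"
    and ht: "\<And>i j. 1 \<le> i \<Longrightarrow> i < j \<Longrightarrow> j \<le> n \<Longrightarrow> t i < t j"
    and hp: "\<And>k. k \<le> n \<Longrightarrow> p k > 0"
  defines "q \<equiv> qq p"
  shows
   "(\<forall>z. z \<notin> {w. Im w = 0 \<and> Re w \<le> 0} \<longrightarrow>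
      (\<forall>k. 1 \<le> k \<and> k \<le> n - 1 \<longrightarrow>
        a_plus t q n z 0 / of_real (q 0) =
          (a_plus t q n z k * b_minus t q z k - a_minus t q z k * b_plus t q n z k) / of_real (q k)
        \<and> (a_plus t q n z k * b_minus t q z k - a_minus t q z k * b_plus t q n z k) / of_real (q k)
          = b_minus t q z n / of_real (q n)))
  \<and> (\<forall>lam::real. lam > 0 \<longrightarrow>
      (\<forall>k. k \<le> n \<longrightarrow>
        q 0 * ((cmod (b_minus t q (of_real lam) k))\<^sup>2 - (cmod (a_minus t q (of_real lam) k))\<^sup>2) = q k
        \<and> q n * ((cmod (a_plus t q n (of_real lam) k))\<^sup>2 - (cmod (b_plus t q n (of_real lam) k))\<^sup>2) = q k
        \<and> (cmod (a_plus t q n (of_real lam) k))\<^sup>2 / q 0 + (cmod (a_minus t q (of_real lam) k))\<^sup>2 / q n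
          = (cmod (b_plus t q n (of_real lam) k))\<^sup>2 / q 0 + (cmod (b_minus t q (of_real lam) k))\<^sup>2 / q n))
  \<and> (\<forall>lam::real. lam > 0 \<longrightarrow>
      (\<forall>k. 1 \<le> k \<and> k \<le> n - 1 \<longrightarrow>
        b_plus t q n (of_real lam) 0 / of_real (q 0) =
          (b_plus t q n (of_real lam) k * cnj (b_minus t q (of_real lam) k)
           - a_plus t q n (of_real lam) k * cnj (a_minus t q (of_real lam) k)) / of_real (q k)
        \<and> (b_plus t q n (of_real lam) k * cnj (b_minus t q (of_real lam) k)
           - a_plus t q n (of_real lam) k * cnj (a_minus t q (of_real lam) k)) / of_real (q k)
          = - cnj (a_minus t q (of_real lam) n) / of_real (q n)))"
proof -
  have qpos: "q k > 0" if "k \<le> n" for k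
    using hp[OF that] by (simp add: q_def qq_def)
  then have nz: "\<And>k. k \<le> n \<Longrightarrow> q k \<noteq> 0"
    by fastforce
  have "q 0 > 0" "q n > 0"
    using qpos by auto
  have norms: "q 0 * ((cmod (b_minus t q (of_real lam) k))\<^sup>2 - (cmod (a_minus t q (of_real lam) k))\<^sup>2) = q k
      \<and> q n * ((cmod (a_plus t q n (of_real lam) k))\<^sup>2 - (cmod (b_plus t q n (of_real lam) k))\<^sup>2) = q k
      \<and> (cmod (a_plus t q n (of_real lam) k))\<^sup>2 / q 0 + (cmod (a_minus t q (of_real lam) k))\<^sup>2 / q n
        = (cmod (b_plus t q n (of_real lam) k))\<^sup>2 / q 0 + (cmod (b_minus t q (of_real lam) k))\<^sup>2 / q n"
    if "lam > 0" "k \<le> n" for lam k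
    using conn_minus_norm_quotient[where q = q and n = n, OF nz, of lam k t]
      conn_plus_norm_quotient[where q = q and n = n, OF nz, of lam k t]
      that qpos[OF \<open>k \<le> n\<close>] \<open>q 0 > 0\<close> \<open>q n > 0\<close>
    by (auto simp: field_simps)
  show ?thesis
    using conn_wronskian_quotient[where q = q and n = n, OF nz]
      conn_wronskian_quotient[where q = q and n = n, OF nz order_refl]
      conn_indefinite_form_quotient[where q = q and n = n, OF nz]
      conn_indefinite_form_quotient[where q = q and n = n, OF nz _ order_refl] norms
    by (auto simp: a_plus_def b_plus_def a_minus_def b_minus_def)
qed

end
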